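(* Let $n\ge1$, $m\ge n$, and ${\sf A}_k(\mathbf u)$ as defined in the context. (i) For $\mathbf t=(t_0,\dots,t_m)$ put $h(\mathbf t;\mathbf u)=\sum_{k=0}^m t_k p_k(\mathbf u)$ and ${\sf H}(\mathbf t;\mathbf u)=\sum_{k=0}^m t_k{\sf A}_k(\mathbf u)$. Then ${\sf H}$ is upper triangular with $({\sf H})_{i,j}=\frac{\partial^{\,j-i}h}{\partial u_1^{\,j-i}}$ for $i\le j$, and the critical point equations $\frac{\partial\Phi}{\partial y_i}(\mathbf t;\mathbf u)=0$ ($i=1,\dots,n$) for $\Phi(\mathbf t;\mathbf y)=\sum_{k=0}^m t_kp_{k+1}(\mathbf y)$ hold if and only if ${\sf H}(\mathbf t;\mathbf u)=0$. (ii) For every $\mathbf u\in\mathbb C^n$, setting $t_i=(-1)^i e_{n-i}(\mathbf u)$ for $i=0,1,\dots,n$ and $t_k=0$ for $n<k\le m$ gives ${\sf H}(\mathbf t;\mathbf u)=0$, where $e_j(\mathbf u):=(-1)^j p_j(-\mathbf u)$.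
   Context: The elementary Schur polynomials $p_k(\mathbf u)$, $\mathbf u=(u_1,\dots,u_n)$, are defined by $\exp\big(\sum_{i=1}^n u_i z^i\big)=\sum_{k\ge 0}p_k(\mathbf u)z^k$, with $p_k=0$ for $k<0$. ${\sf A}_k(\mathbf u)$ is the $n\times n$ matrix with $({\sf A}_k)_{i,j}=p_{k-j+i}(\mathbf u)$ for $i\le j$ and $0$ for $i>j$. *)

theory Defs
  imports "HOL-Analysis.Analysis" "HOL-Computational_Algebra.Formal_Power_Series"
begin

text \<open>Vectors u = (u_1,...,u_n) are functions nat => complex; only the values at 1..n matter.\<close>
definition schur_p :: "nat \<Rightarrow> (nat \<Rightarrow> complex) \<Rightarrow> int \<Rightarrow> complex" where
  "schur_p n u k = (if k < 0 then 0 else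
     fps_nth (fps_exp 1 oo (\<Sum>i=1..n. fps_const (u i) * fps_X ^ i)) (nat k))"

definition schur_A :: "nat \<Rightarrow> nat \<Rightarrow> (nat \<Rightarrow> complex) \<Rightarrow> nat \<Rightarrow> nat \<Rightarrow> complex" where
  "schur_A n k u i j = (if i \<le> j then schur_p n u (int k - int j + int i) else 0)"

definition schur_h :: "nat \<Rightarrow> nat \<Rightarrow> (nat \<Rightarrow> complex) \<Rightarrow> (nat \<Rightarrow> complex) \<Rightarrow> complex" where
  "schur_h n m t u = (\<Sum>k=0..m. t k * schur_p n u (int k))"

definition schur_H :: "nat \<Rightarrow> nat \<Rightarrow> (nat \<Rightarrow> complex) \<Rightarrow> (nat \<Rightarrow> complex) \<Rightarrow> nat \<Rightarrow> nat \<Rightarrow> complex" where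
  "schur_H n m t u i j = (\<Sum>k=0..m. t k * schur_A n k u i j)"

definition schur_Phi :: "nat \<Rightarrow> nat \<Rightarrow> (nat \<Rightarrow> complex) \<Rightarrow> (nat \<Rightarrow> complex) \<Rightarrow> complex" where
  "schur_Phi n m t y = (\<Sum>k=0..m. t k * schur_p n y (int k + 1))"

definition partial_var :: "nat \<Rightarrow> ((nat \<Rightarrow> complex) \<Rightarrow> complex) \<Rightarrow> (nat \<Rightarrow> complex) \<Rightarrow> complex" where
  "partial_var i g u = deriv (\<lambda>x. g (u(i := x))) (u i)"

definition schur_e :: "nat \<Rightarrow> (nat \<Rightarrow> complex) \<Rightarrow> nat \<Rightarrow> complex" where
  "schur_e n u j = (-1) ^ j * schur_p n (\<lambda>i. - u i) (int j)"

end

theory Submission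
  imports Defs
begin

(*
  Write E(z) = exp (sum_i u_i z^i) = sum_k p_k(u) z^k. From E' = (sum_i i u_i z^(i-1)) E one gets
  the recurrence k p_k = sum_i i u_i p_(k-i), and by induction on k the rule dp_k/du_j = p_(k-j).
  Hence d^d h/du_1^d, the entries of H on its d-th superdiagonal and dPhi/du_(d+1) are all the
  same shifted sum sum_k t_k p_(k-d), which gives (i). For (ii), E(-u) E(u) = 1, and with
  t_k = (-1)^k e_(n-k)(u) = (-1)^n p_(n-k)(-u) the shifted sum is, up to sign, the coefficient
  of z^(n-d) in that product, which vanishes for d < n.
*)

unbundle no vec_syntax
notation fps_nth (infixl \<open>$\<close> 75)

definition schur_exponent :: "nat \<Rightarrow> (nat \<Rightarrow> complex) \<Rightarrow> complex fps" where
  "schur_exponent n u = (\<Sum>i=1..n. fps_const (u i) * fps_X ^ i)"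

definition schur_series :: "nat \<Rightarrow> (nat \<Rightarrow> complex) \<Rightarrow> complex fps" where
  "schur_series n u = fps_exp 1 oo schur_exponent n u"

lemma schur_p_conv_schur_series:
  "schur_p n u k = (if k < 0 then 0 else schur_series n u $ nat k)"
  unfolding schur_p_def schur_series_def schur_exponent_def by simp

lemma schur_p_of_nat [simp]: "schur_p n u (int k) = schur_series n u $ k"
  by (simp add: schur_p_conv_schur_series)

lemma schur_p_neg [simp]: "k < 0 \<Longrightarrow> schur_p n u k = 0"
  by (simp add: schur_p_conv_schur_series)

lemma schur_p_0 [simp]: "schur_p n u 0 = 1"
  by (simp add: schur_p_conv_schur_series schur_series_def)

lemma fps_deriv_schur_series:
  "fps_deriv (schur_series n u) = fps_deriv (schur_exponent n u) * schur_series n u"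
  unfolding schur_series_def
  by (simp add: fps_compose_deriv schur_exponent_def fps_sum_nth)

lemma fps_deriv_schur_exponent:
  "fps_deriv (schur_exponent n u) = (\<Sum>i=1..n. fps_const (of_nat i * u i) * fps_X ^ (i - 1))"
  unfolding schur_exponent_def fps_deriv_sum
  by (intro sum.cong refl) (simp add: fps_deriv_power fps_const_mult [symmetric] del: fps_const_mult)

lemma schur_p_recurrence:
  "of_int k * schur_p n u k = (\<Sum>i=1..n. of_nat i * u i * schur_p n u (k - int i))"
proof (cases "k \<le> 0")
  case True
  then show ?thesis by (cases "k = 0") auto
next
  case False
  then obtain l where k: "k = int (Suc l)"
    by (metis not_le pos_int_cases of_nat_Suc gr0_implies_Suc of_nat_0_less_iff)
  have "of_int k * schur_p n u k = fps_deriv (schur_series n u) $ l"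
    by (simp add: k del: of_nat_Suc)
  also have "\<dots> = (\<Sum>i=1..n. of_nat i * u i * (fps_X ^ (i - 1) * schur_series n u) $ l)"
    by (simp add: fps_deriv_schur_series fps_deriv_schur_exponent sum_distrib_right fps_sum_nth
                  mult.assoc)
  also have "\<dots> = (\<Sum>i=1..n. of_nat i * u i * schur_p n u (k - int i))"
    by (intro sum.cong refl)
       (auto simp: k fps_X_power_mult_nth schur_p_conv_schur_series nat_diff_distrib' Suc_diff_le
             simp del: of_nat_Suc)
  finally show ?thesis .
qed

lemma has_field_derivative_schur_p_recurrence_sum:
  assumes j: "1 \<le> j" "j \<le> n"
    and IH: "\<And>i. i \<in> {1..n} \<Longrightarrow> ((\<lambda>y. schur_p n (u(j := y)) (k - int i)) has_field_derivative
                schur_p n u (k - int i - int j)) (at (u j))"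
  shows "((\<lambda>y. \<Sum>i=1..n. of_nat i * (u(j := y)) i * schur_p n (u(j := y)) (k - int i))
           has_field_derivative of_int k * schur_p n u (k - int j)) (at (u j))"
proof -
  let ?\<delta> = "\<lambda>i. if i = j then 1 else 0 :: complex"
  have "((\<lambda>y. \<Sum>i=1..n. of_nat i * (u(j := y)) i * schur_p n (u(j := y)) (k - int i))
          has_field_derivative (\<Sum>i=1..n. of_nat i * (?\<delta> i * schur_p n u (k - int i)
                                   + u i * schur_p n u (k - int i - int j)))) (at (u j))"
    unfolding mult.assoc
  proof (intro DERIV_sum DERIV_cmult)
    fix i assume "i \<in> {1..n}"
    show "((\<lambda>y. (u(j := y)) i * schur_p n (u(j := y)) (k - int i)) has_field_derivative
            ?\<delta> i * schur_p n u (k - int i) + u i * schur_p n u (k - int i - int j)) (at (u j))"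
    proof (rule DERIV_mult[OF _ IH[OF \<open>i \<in> {1..n}\<close>], THEN DERIV_cong])
      show "((\<lambda>y. (u(j := y)) i) has_field_derivative ?\<delta> i) (at (u j))"
        by (cases "i = j") auto
    qed (simp add: algebra_simps)
  qed
  moreover have "(\<Sum>i=1..n. of_nat i * (?\<delta> i * schur_p n u (k - int i)))
                   = of_nat j * schur_p n u (k - int j)"
    using j
    by (subst sum.cong[OF refl, where h = "\<lambda>i. if i = j then of_nat i * schur_p n u (k - int i) else 0"])
       (auto simp: sum.delta)
  moreover have "(\<Sum>i=1..n. of_nat i * (u i * schur_p n u (k - int i - int j)))
                   = of_int (k - int j) * schur_p n u (k - int j)"
    using schur_p_recurrence[of "k - int j" n u] by (simp add: mult.assoc diff_diff_eq add.commute)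
  ultimately show ?thesis
    by (simp add: distrib_left sum.distrib algebra_simps)
qed

lemma has_field_derivative_schur_p:
  assumes j: "1 \<le> j" "j \<le> n"
  shows "((\<lambda>y. schur_p n (u(j := y)) k) has_field_derivative schur_p n u (k - int j)) (at (u j))"
proof (induction "nat k" arbitrary: k rule: less_induct)
  case less
  show ?case
  proof (cases "k \<le> 0")
    case True
    then show ?thesis using j by (cases "k = 0") auto
  next
    case False
    then have k_nonzero: "of_int k \<noteq> (0 :: complex)" by simp
    define R where "R v = (\<Sum>i=1..n. of_nat i * v i * schur_p n v (k - int i))" for v
    have "((\<lambda>y. R (u(j := y))) has_field_derivative of_int k * schur_p n u (k - int j)) (at (u j))"
      unfolding R_def using j False
      by (intro has_field_derivative_schur_p_recurrence_sum less) auto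
    then have "((\<lambda>y. R (u(j := y)) / of_int k) has_field_derivative schur_p n u (k - int j)) (at (u j))"
      by (rule DERIV_cong[OF DERIV_cdivide]) (use k_nonzero in simp)
    moreover have "schur_p n v k = R v / of_int k" for v
      using schur_p_recurrence[of k n v] k_nonzero by (simp add: R_def field_simps)
    ultimately show ?thesis by simp
  qed
qed

lemma partial_var_sum_schur_p:
  assumes "1 \<le> j" "j \<le> n" "finite K"
  shows "partial_var j (\<lambda>v. \<Sum>k\<in>K. t k * schur_p n v (c k)) u
           = (\<Sum>k\<in>K. t k * schur_p n u (c k - int j))"
  unfolding partial_var_def
  by (intro DERIV_imp_deriv DERIV_sum DERIV_cmult has_field_derivative_schur_p assms)

definition schur_h_shift ::
    "nat \<Rightarrow> nat \<Rightarrow> (nat \<Rightarrow> complex) \<Rightarrow> int \<Rightarrow> (nat \<Rightarrow> complex) \<Rightarrow> complex" where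
  "schur_h_shift n m t d u = (\<Sum>k=0..m. t k * schur_p n u (int k - d))"

lemma funpow_partial_var_1_schur_h:
  assumes "1 \<le> n"
  shows "(partial_var 1 ^^ d) (schur_h n m t) = schur_h_shift n m t (int d)"
proof (induction d)
  case 0
  show ?case by (simp add: fun_eq_iff schur_h_def schur_h_shift_def)
next
  case (Suc d)
  show ?case
  proof
    fix u
    have "(partial_var 1 ^^ Suc d) (schur_h n m t) = partial_var 1 (schur_h_shift n m t (int d))"
      by (simp only: funpow.simps comp_apply Suc.IH)
    then show "(partial_var 1 ^^ Suc d) (schur_h n m t) u = schur_h_shift n m t (int (Suc d)) u"
      using partial_var_sum_schur_p[OF order.refl assms, of "{0..m}" t "\<lambda>k. int k - int d" u]
      by (simp add: Suc.IH schur_h_shift_def[abs_def] algebra_simps)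
  qed
qed

lemma partial_var_schur_Phi:
  assumes "1 \<le> i" "i \<le> n"
  shows "partial_var i (schur_Phi n m t) u = schur_h_shift n m t (int i - 1) u"
  using partial_var_sum_schur_p[OF assms, of "{0..m}" t "\<lambda>k. int k + 1" u]
  by (simp add: schur_Phi_def[abs_def] schur_h_shift_def algebra_simps)

lemma schur_H_lower: "j < i \<Longrightarrow> schur_H n m t u i j = 0"
  by (simp add: schur_H_def schur_A_def)

lemma schur_H_upper: "i \<le> j \<Longrightarrow> schur_H n m t u i j = schur_h_shift n m t (int j - int i) u"
  by (simp add: schur_H_def schur_A_def schur_h_shift_def algebra_simps)

lemma schur_H_eq_0_iff_shift:
  "(\<forall>i\<in>{1..n}. \<forall>j\<in>{1..n}. schur_H n m t u i j = 0)
     \<longleftrightarrow> (\<forall>d<n. schur_h_shift n m t (int d) u = 0)"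
proof safe
  fix d assume "\<forall>i\<in>{1..n}. \<forall>j\<in>{1..n}. schur_H n m t u i j = 0" and "d < n"
  then have "schur_H n m t u 1 (d + 1) = 0" by simp
  then show "schur_h_shift n m t (int d) u = 0" by (simp add: schur_H_upper)
next
  fix i j assume shift: "\<forall>d<n. schur_h_shift n m t (int d) u = 0" and "i \<in> {1..n}" "j \<in> {1..n}"
  show "schur_H n m t u i j = 0"
  proof (cases "i \<le> j")
    case True
    with \<open>i \<in> {1..n}\<close> \<open>j \<in> {1..n}\<close> have "j - i < n" by auto
    with shift have "schur_h_shift n m t (int (j - i)) u = 0" by blast
    with True show ?thesis by (simp add: schur_H_upper of_nat_diff)
  qed (simp add: schur_H_lower)
qed

lemma partial_var_schur_Phi_eq_0_iff_shift:
  "(\<forall>i\<in>{1..n}. partial_var i (schur_Phi n m t) u = 0)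
     \<longleftrightarrow> (\<forall>d<n. schur_h_shift n m t (int d) u = 0)"
proof safe
  fix d assume "\<forall>i\<in>{1..n}. partial_var i (schur_Phi n m t) u = 0" and "d < n"
  then have "partial_var (d + 1) (schur_Phi n m t) u = 0" by simp
  with \<open>d < n\<close> show "schur_h_shift n m t (int d) u = 0" by (simp add: partial_var_schur_Phi)
next
  fix i assume shift: "\<forall>d<n. schur_h_shift n m t (int d) u = 0" and "i \<in> {1..n}"
  then have "i - 1 < n" by auto
  with shift have "schur_h_shift n m t (int (i - 1)) u = 0" by blast
  with \<open>i \<in> {1..n}\<close> show "partial_var i (schur_Phi n m t) u = 0"
    by (simp add: partial_var_schur_Phi of_nat_diff)
qed

lemma schur_exponent_uminus: "schur_exponent n (\<lambda>i. - u i) = - schur_exponent n u"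
  unfolding schur_exponent_def sum_negf[symmetric] by (intro sum.cong) (auto simp: fps_eq_iff)

lemma schur_series_uminus_mult: "schur_series n (\<lambda>i. - u i) * schur_series n u = 1"
proof -
  have "fps_deriv (schur_series n (\<lambda>i. - u i) * schur_series n u) = 0"
    by (simp add: fps_deriv_schur_series schur_exponent_uminus algebra_simps)
  then have "schur_series n (\<lambda>i. - u i) * schur_series n u
               = fps_const ((schur_series n (\<lambda>i. - u i) * schur_series n u) $ 0)"
    by (simp only: fps_deriv_eq_0_iff)
  then show ?thesis by (simp add: schur_series_def)
qed

lemma schur_p_uminus_convolution:
  assumes "0 < N"
  shows "(\<Sum>a\<le>N. schur_p n (\<lambda>i. - u i) (int a) * schur_p n u (int N - int a)) = 0"
proof -
  have "(\<Sum>a\<le>N. schur_p n (\<lambda>i. - u i) (int a) * schur_p n u (int N - int a))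
          = (schur_series n (\<lambda>i. - u i) * schur_series n u) $ N"
    unfolding fps_mult_nth atLeast0AtMost
    by (intro sum.cong refl) (auto simp: schur_p_conv_schur_series nat_diff_distrib')
  with assms show ?thesis by (simp add: schur_series_uminus_mult)
qed

lemma schur_h_shift_elementary_eq_0:
  assumes "n \<le> m" "d < n"
  shows "schur_h_shift n m (\<lambda>k. if k \<le> n then (-1) ^ k * schur_e n u (n - k) else 0) (int d) u = 0"
    (is "schur_h_shift n m ?t _ u = 0")
proof -
  let ?q = "\<lambda>a. schur_p n (\<lambda>i. - u i) (int a)"
  have "schur_h_shift n m ?t (int d) u = (\<Sum>k=0..n. ?t k * schur_p n u (int k - int d))"
    unfolding schur_h_shift_def by (rule sum.mono_neutral_right) (use assms in auto)
  also have "\<dots> = (-1) ^ n * (\<Sum>k=0..n. ?q (n - k) * schur_p n u (int k - int d))"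
    unfolding sum_distrib_left
  proof (intro sum.cong refl)
    fix k assume "k \<in> {0..n}"
    then have "(-1 :: complex) ^ k * (-1) ^ (n - k) = (-1) ^ n" by (simp add: power_add [symmetric])
    with \<open>k \<in> {0..n}\<close>
    show "?t k * schur_p n u (int k - int d) = (-1) ^ n * (?q (n - k) * schur_p n u (int k - int d))"
      by (simp add: schur_e_def mult.assoc [symmetric] del: schur_p_of_nat)
  qed
  also have "(\<Sum>k=0..n. ?q (n - k) * schur_p n u (int k - int d))
               = (\<Sum>a=0..n. ?q a * schur_p n u (int (n - a) - int d))"
    by (subst sum.atLeastAtMost_rev) (intro sum.cong, auto)
  also have "\<dots> = (\<Sum>a\<le>n. ?q a * schur_p n u (int (n - d) - int a))"
    unfolding atLeast0AtMost
    by (intro sum.cong refl) (use assms in \<open>auto simp: of_nat_diff diff_diff_eq add.commute\<close>)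
  also have "\<dots> = (\<Sum>a\<le>n - d. ?q a * schur_p n u (int (n - d) - int a))"
    by (rule sum.mono_neutral_right) auto
  also have "\<dots> = 0"
    using assms by (intro schur_p_uminus_convolution) simp
  finally show ?thesis by simp
qed

theorem mainTheorem5:
  fixes n m :: nat
  assumes "n \<ge> 1" and "m \<ge> n"
  shows "(\<forall>(t :: nat \<Rightarrow> complex) (u :: nat \<Rightarrow> complex).
            (\<forall>i\<in>{1..n}. \<forall>j\<in>{1..n}. i > j \<longrightarrow> schur_H n m t u i j = 0)
          \<and> (\<forall>i\<in>{1..n}. \<forall>j\<in>{1..n}. i \<le> j \<longrightarrow>
               schur_H n m t u i j = (partial_var 1 ^^ (j - i)) (schur_h n m t) u)
          \<and> ((\<forall>i\<in>{1..n}. partial_var i (schur_Phi n m t) u = 0) \<longleftrightarrow>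
               (\<forall>i\<in>{1..n}. \<forall>j\<in>{1..n}. schur_H n m t u i j = 0)))
       \<and> (\<forall>u :: nat \<Rightarrow> complex.
            let t = (\<lambda>k. if k \<le> n then (-1) ^ k * schur_e n u (n - k) else 0)
            in \<forall>i\<in>{1..n}. \<forall>j\<in>{1..n}. schur_H n m t u i j = 0)"
proof (intro conjI allI)
  fix t u :: "nat \<Rightarrow> complex"
  show "\<forall>i\<in>{1..n}. \<forall>j\<in>{1..n}. i > j \<longrightarrow> schur_H n m t u i j = 0"
    by (simp add: schur_H_lower)
  show "\<forall>i\<in>{1..n}. \<forall>j\<in>{1..n}. i \<le> j \<longrightarrow>
          schur_H n m t u i j = (partial_var 1 ^^ (j - i)) (schur_h n m t) u"
  proof (intro ballI impI)
    fix i j :: nat assume "i \<le> j"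
    then have "schur_H n m t u i j = schur_h_shift n m t (int (j - i)) u"
      by (simp add: schur_H_upper of_nat_diff)
    then show "schur_H n m t u i j = (partial_var 1 ^^ (j - i)) (schur_h n m t) u"
      by (simp only: funpow_partial_var_1_schur_h[OF assms(1)])
  qed
  show "(\<forall>i\<in>{1..n}. partial_var i (schur_Phi n m t) u = 0) \<longleftrightarrow>
          (\<forall>i\<in>{1..n}. \<forall>j\<in>{1..n}. schur_H n m t u i j = 0)"
    by (simp only: schur_H_eq_0_iff_shift partial_var_schur_Phi_eq_0_iff_shift)
next
  fix u :: "nat \<Rightarrow> complex"
  show "let t = (\<lambda>k. if k \<le> n then (-1) ^ k * schur_e n u (n - k) else 0)
        in \<forall>i\<in>{1..n}. \<forall>j\<in>{1..n}. schur_H n m t u i j = 0"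
    unfolding Let_def schur_H_eq_0_iff_shift
    using schur_h_shift_elementary_eq_0[OF assms(2)] by blast
qed

end
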